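(* For every $\mathrm{CCS}^-$ process $P$ and every $P'$ with $!P\Rightarrow P'$, we have $!P\approx P'$.
   Context: $\mathrm{CCS}^-$ (CCScore without restriction) processes are given by the grammar $P,Q ::= 0 \mid a.P \mid \overline{a}.P \mid P\,|\,Q \mid\ !P$, where $a$ ranges over an infinite set of names. Actions are inputs $a$, outputs $\overline{a}$ (visible actions) and $\tau$. Transitions: $a.P \xrightarrow{a} P$; $\overline{a}.P \xrightarrow{\overline{a}} P$; if $P\xrightarrow{\gamma}P'$ then $P|Q\xrightarrow{\gamma}P'|Q$ and $Q|P\xrightarrow{\gamma}Q|P'$; if $P\xrightarrow{\overline a}P'$ and $Q\xrightarrow{a}Q'$ then $P|Q\xrightarrow{\tau}P'|Q'$ and $Q|P\xrightarrow{\tau}Q'|P'$; if $P\xrightarrow{\gamma}P'$ then $!P\xrightarrow{\gamma}P'\,|\,!P$; if $P\xrightarrow{a}P'$ and $P\xrightarrow{\overline a}P''$ then $!P\xrightarrow{\tau}P'|P''|\,!P$. $\Rightarrow$ is the reflexive transitive closure of $\xrightarrow{\tau}$; $\stackrel{\hat\alpha}{\Rightarrow}$ is $\Rightarrow$ if $\alpha=\tau$ and $\Rightarrow\xrightarrow{\alpha}\Rightarrow$ otherwise. A process is divergent if it has an infinite sequence of $\tau$-transitions; a relation $\mathcal R$ is divergence-sensitive if $P\,\mathcal R\,Q$ implies ($P$ divergent iff $Q$ divergent). Weak bisimilarity $\approx$ is the union of all symmetric divergence-sensitive relations $\mathcal R$ such that $P\,\mathcal R\,Q$ and $P\xrightarrow{\alpha}P'$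 imply $Q\stackrel{\hat\alpha}{\Rightarrow}Q'$ for some $Q'$ with $P'\,\mathcal R\,Q'$. *)

theory Defs
  imports Main
begin

datatype 'n proc =
    Nil
  | In 'n "'n proc"
  | Out 'n "'n proc"
  | Par "'n proc" "'n proc"
  | Bang "'n proc"

datatype 'n act = AIn 'n | AOut 'n | Tau

inductive trans :: "'n proc \<Rightarrow> 'n act \<Rightarrow> 'n proc \<Rightarrow> bool" where
  t_in:    "trans (In a P) (AIn a) P"
| t_out:   "trans (Out a P) (AOut a) P"
| t_parL:  "trans P g P' \<Longrightarrow> trans (Par P Q) g (Par P' Q)"
| t_parR:  "trans P g P' \<Longrightarrow> trans (Par Q P) g (Par Q P')"
| t_comL:  "trans P (AOut a) P' \<Longrightarrow> trans Q (AIn a) Q' \<Longrightarrow> trans (Par P Q) Tau (Par P' Q')"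
| t_comR:  "trans P (AOut a) P' \<Longrightarrow> trans Q (AIn a) Q' \<Longrightarrow> trans (Par Q P) Tau (Par Q' P')"
| t_bang:  "trans P g P' \<Longrightarrow> trans (Bang P) g (Par P' (Bang P))"
| t_bangc: "trans P (AIn a) P' \<Longrightarrow> trans P (AOut a) P'' \<Longrightarrow>
            trans (Bang P) Tau (Par (Par P' P'') (Bang P))"

definition tau_star :: "'n proc \<Rightarrow> 'n proc \<Rightarrow> bool" where
  "tau_star = (\<lambda>P Q. trans P Tau Q)\<^sup>*\<^sup>*"

definition weak_trans :: "'n proc \<Rightarrow> 'n act \<Rightarrow> 'n proc \<Rightarrow> bool" where
  "weak_trans P \<alpha> Q =
     (if \<alpha> = Tau then tau_star P Q
      else (\<exists>P1 P2. tau_star P P1 \<and> trans P1 \<alpha> P2 \<and> tau_star P2 Q))"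

definition divergent :: "'n proc \<Rightarrow> bool" where
  "divergent P = (\<exists>f. f 0 = P \<and> (\<forall>i. trans (f i) Tau (f (Suc i))))"

definition weak_bisimulation :: "('n proc \<Rightarrow> 'n proc \<Rightarrow> bool) \<Rightarrow> bool" where
  "weak_bisimulation R =
     ((\<forall>P Q. R P Q \<longrightarrow> R Q P)
    \<and> (\<forall>P Q. R P Q \<longrightarrow> (divergent P \<longleftrightarrow> divergent Q))
    \<and> (\<forall>P Q \<alpha> P'. R P Q \<longrightarrow> trans P \<alpha> P' \<longrightarrow> (\<exists>Q'. weak_trans Q \<alpha> Q' \<and> R P' Q')))"

definition wbisim :: "'n proc \<Rightarrow> 'n proc \<Rightarrow> bool" where
  "wbisim P Q = (\<exists>R. weak_bisimulation R \<and> R P Q)"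

end

theory Submission
  imports Defs "HOL-Library.Multiset"
begin

text \<open>Up to associativity, commutativity and unit laws of parallel composition a process is the
multiset of its threads, and its transitions are exactly the moves of one thread or the
synchronisation of two.  Call two processes related if both contain the thread \<open>!P\<close> and they
differ only in threads that \<open>!P\<close> can spawn by internal steps while surviving itself.  Every
derivative \<open>P'\<close> of \<open>!P\<close> is related to \<open>!P\<close>, and the relation is a weak bisimulation: a process
first re-spawns from its own \<open>!P\<close> the threads of its partner and then mimics the partner's move.
For divergence, either \<open>!P\<close> has an internal move, and then every process with the thread \<open>!P\<close>
diverges, or it has none, and then related processes have the same threads.\<close>

lemma add_mset_eq_plusE:
  assumes "add_mset x M = A + B"
  obtains A' where "A = add_mset x A'" "M = A' + B"
    | B' where "B = add_mset x B'" "M = A + B'"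
proof -
  have "x \<in># A + B"
    using assms by (metis union_single_eq_member)
  then consider "x \<in># A" | "x \<in># B"
    by auto
  then show ?thesis
  proof cases
    case 1
    then obtain A' where "A = add_mset x A'"
      by (metis mset_add)
    with assms that(1) show ?thesis by simp
  next
    case 2
    then obtain B' where "B = add_mset x B'"
      by (metis mset_add)
    with assms that(2) show ?thesis by simp
  qed
qed

lemma add_mset2_eq_plusE:
  assumes "add_mset x (add_mset y M) = A + B"
  obtains A' where "A = add_mset x (add_mset y A')" "M = A' + B"
    | B' where "B = add_mset x (add_mset y B')" "M = A + B'"
    | A' B' where "A = add_mset x A'" "B = add_mset y B'" "M = A' + B'"
    | A' B' where "A = add_mset y A'" "B = add_mset x B'" "M = A' + B'"
  using assms
proof (rule add_mset_eq_plusE)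
  fix A' assume A: "A = add_mset x A'" and y: "add_mset y M = A' + B"
  from y show ?thesis
    by (rule add_mset_eq_plusE) (use A that(1,3) in auto)
next
  fix B' assume B: "B = add_mset x B'" and y: "add_mset y M = A + B'"
  from y show ?thesis
    by (rule add_mset_eq_plusE) (use B that(2,4) in auto)
qed

section \<open>Processes as multisets of threads\<close>

fun threads :: "'n proc \<Rightarrow> 'n proc multiset" where
  "threads Nil = {#}"
| "threads (Par X Y) = threads X + threads Y"
| "threads X = {#X#}"

inductive mtrans :: "'n proc multiset \<Rightarrow> 'n act \<Rightarrow> 'n proc multiset \<Rightarrow> bool" where
  mtrans_thread: "trans c \<alpha> Q \<Longrightarrow> mtrans (add_mset c M) \<alpha> (M + threads Q)"
| mtrans_sync: "trans c (AOut a) Q \<Longrightarrow> trans d (AIn a) R \<Longrightarrow>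
    mtrans (add_mset c (add_mset d M)) Tau (M + threads Q + threads R)"

lemma mtrans_add_right: "mtrans M \<alpha> M' \<Longrightarrow> mtrans (M + N) \<alpha> (M' + N)"
proof (induction rule: mtrans.induct)
  case (mtrans_thread c \<alpha> Q M)
  then show ?case
    using mtrans.mtrans_thread[of c \<alpha> Q "M + N"] by (simp add: ac_simps)
next
  case (mtrans_sync c a Q d R M)
  then show ?case
    using mtrans.mtrans_sync[of c a Q d R "M + N"] by (simp add: ac_simps)
qed

lemma mtrans_add_left: "mtrans M \<alpha> M' \<Longrightarrow> mtrans (N + M) \<alpha> (N + M')"
  using mtrans_add_right by (metis add.commute)

lemma mtrans_visibleE:
  assumes "mtrans M \<alpha> M'" and "\<alpha> \<noteq> Tau"
  obtains c M0 Q where "M = add_mset c M0" "trans c \<alpha> Q" "M' = M0 + threads Q"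
  using assms by (cases rule: mtrans.cases) auto

lemma mtrans_sync_plus:
  assumes "mtrans M (AOut a) M'" and "mtrans N (AIn a) N'"
  shows "mtrans (M + N) Tau (M' + N')"
proof -
  obtain c M0 Q where M: "M = add_mset c M0" "trans c (AOut a) Q" "M' = M0 + threads Q"
    using assms(1) by (rule mtrans_visibleE) simp
  obtain d N0 R where N: "N = add_mset d N0" "trans d (AIn a) R" "N' = N0 + threads R"
    using assms(2) by (rule mtrans_visibleE) simp
  have "mtrans (add_mset c (add_mset d (M0 + N0))) Tau (M0 + N0 + threads Q + threads R)"
    using M(2) N(2) by (rule mtrans.mtrans_sync)
  then show ?thesis
    using M(1,3) N(1,3) by (simp add: ac_simps add_mset_commute)
qed

lemma trans_imp_mtrans: "trans X \<alpha> X' \<Longrightarrow> mtrans (threads X) \<alpha> (threads X')"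
proof (induction rule: trans.induct)
  case (t_comR P a P' Q Q')
  then show ?case
    using mtrans_sync_plus by (fastforce simp: add.commute)
next
  case (t_bang P g P')
  then show ?case
    using mtrans_thread[OF trans.t_bang, of P g P' "{#}"] by simp
next
  case (t_bangc P a P' P'')
  then show ?case
    using mtrans_thread[OF trans.t_bangc, of P a P' P'' "{#}"] by simp
qed (use mtrans_thread[of _ _ _ "{#}"] mtrans_add_right mtrans_add_left mtrans_sync_plus
       in \<open>auto intro: trans.intros\<close>)

lemma thread_trans_imp_trans:
  "threads X = add_mset c M \<Longrightarrow> trans c \<alpha> Q \<Longrightarrow>
    \<exists>X'. trans X \<alpha> X' \<and> threads X' = M + threads Q"
proof (induction X arbitrary: M)
  case (Par X1 X2)
  from Par.prems(1)[symmetric] show ?case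
    unfolding threads.simps
  proof (rule add_mset_eq_plusE)
    fix A' assume "threads X1 = add_mset c A'" "M = A' + threads X2"
    with Par.IH(1) Par.prems(2) show ?thesis
      by (fastforce intro: trans.intros simp: ac_simps)
  next
    fix B' assume "threads X2 = add_mset c B'" "M = threads X1 + B'"
    with Par.IH(2) Par.prems(2) show ?thesis
      by (fastforce intro: trans.intros simp: ac_simps)
  qed
qed auto

lemma thread_sync_imp_trans:
  "threads X = add_mset c (add_mset d M) \<Longrightarrow> trans c (AOut a) Q \<Longrightarrow> trans d (AIn a) R \<Longrightarrow>
    \<exists>X'. trans X Tau X' \<and> threads X' = M + threads Q + threads R"
proof (induction X arbitrary: M)
  case (Par X1 X2)
  from Par.prems(1)[symmetric] show ?case
    unfolding threads.simps
  proof (rule add_mset2_eq_plusE)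
    fix A' assume "threads X1 = add_mset c (add_mset d A')" "M = A' + threads X2"
    with Par.IH(1) Par.prems(2,3) show ?thesis
      by (fastforce intro: trans.intros simp: ac_simps)
  next
    fix B' assume "threads X2 = add_mset c (add_mset d B')" "M = threads X1 + B'"
    with Par.IH(2) Par.prems(2,3) show ?thesis
      by (fastforce intro: trans.intros simp: ac_simps)
  next
    fix A' B' assume A': "threads X1 = add_mset c A'" and B': "threads X2 = add_mset d B'"
      and "M = A' + B'"
    moreover obtain X1' where "trans X1 (AOut a) X1'" "threads X1' = A' + threads Q"
      using thread_trans_imp_trans[OF A' Par.prems(2)] by blast
    moreover obtain X2' where "trans X2 (AIn a) X2'" "threads X2' = B' + threads R"
      using thread_trans_imp_trans[OF B' Par.prems(3)] by blast
    ultimately show ?thesis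
      by (intro exI[of _ "Par X1' X2'"]) (auto intro: trans.intros simp: ac_simps)
  next
    fix A' B' assume A': "threads X1 = add_mset d A'" and B': "threads X2 = add_mset c B'"
      and "M = A' + B'"
    moreover obtain X1' where "trans X1 (AIn a) X1'" "threads X1' = A' + threads R"
      using thread_trans_imp_trans[OF A' Par.prems(3)] by blast
    moreover obtain X2' where "trans X2 (AOut a) X2'" "threads X2' = B' + threads Q"
      using thread_trans_imp_trans[OF B' Par.prems(2)] by blast
    ultimately show ?thesis
      by (intro exI[of _ "Par X1' X2'"]) (auto intro: trans.intros simp: ac_simps)
  qed
qed auto

lemma mtrans_imp_trans: "mtrans (threads X) \<alpha> M' \<Longrightarrow> \<exists>X'. trans X \<alpha> X' \<and> threads X' = M'"
  by (cases rule: mtrans.cases) (auto dest: thread_trans_imp_trans thread_sync_imp_trans)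

abbreviation mtau_star :: "'n proc multiset \<Rightarrow> 'n proc multiset \<Rightarrow> bool" where
  "mtau_star \<equiv> (\<lambda>M N. mtrans M Tau N)\<^sup>*\<^sup>*"

lemma tau_star_imp_mtau_star: "tau_star X Y \<Longrightarrow> mtau_star (threads X) (threads Y)"
  unfolding tau_star_def
  by (induction rule: rtranclp_induct) (auto intro: rtranclp.rtrancl_into_rtrancl trans_imp_mtrans)

lemma mtau_star_imp_tau_star: "mtau_star (threads X) N \<Longrightarrow> \<exists>Y. tau_star X Y \<and> threads Y = N"
proof (induction rule: rtranclp_induct)
  case base
  then show ?case by (auto simp: tau_star_def)
next
  case (step N1 N2)
  then obtain Y1 Y2 where "tau_star X Y1" "trans Y1 Tau Y2" "threads Y2 = N2"
    using mtrans_imp_trans by blast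
  then show ?case
    unfolding tau_star_def by (blast intro: rtranclp.rtrancl_into_rtrancl)
qed

lemma mtau_star_add_right: "mtau_star M N \<Longrightarrow> mtau_star (M + K) (N + K)"
  by (induction rule: rtranclp_induct) (auto intro: rtranclp.rtrancl_into_rtrancl mtrans_add_right)

lemma Bang_in_threads_of_trans: "trans (Bang P) \<alpha> Q \<Longrightarrow> Bang P \<in># threads Q"
  by (erule trans.cases) auto

lemma mtrans_keeps_Bang: "mtrans M \<alpha> N \<Longrightarrow> Bang P \<in># M \<Longrightarrow> Bang P \<in># N"
proof (induction rule: mtrans.induct)
  case (mtrans_thread c \<alpha> Q M)
  then show ?case
    using Bang_in_threads_of_trans by (cases "c = Bang P") auto
next
  case (mtrans_sync c a Q d R M)
  then show ?case
    using Bang_in_threads_of_trans by (cases "c = Bang P"; cases "d = Bang P") auto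
qed

lemma mtau_star_keeps_Bang: "mtau_star M N \<Longrightarrow> Bang P \<in># M \<Longrightarrow> Bang P \<in># N"
  by (induction rule: rtranclp_induct) (auto dest: mtrans_keeps_Bang)

section \<open>Divergence\<close>

lemma divergentI_invariant:
  assumes "I X" and "\<And>Z. I Z \<Longrightarrow> \<exists>Z'. trans Z Tau Z' \<and> I Z'"
  shows "divergent X"
proof -
  obtain f where "\<forall>n. (I (f n) \<and> (n = 0 \<longrightarrow> f n = X)) \<and> trans (f n) Tau (f (Suc n))"
    using dependent_nat_choice[of "\<lambda>n Z. I Z \<and> (n = 0 \<longrightarrow> Z = X)" "\<lambda>_ Z Z'. trans Z Tau Z'"]
      assms by blast
  then show ?thesis
    unfolding divergent_def by blast
qed

lemma divergentE:
  assumes "divergent X"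
  obtains X' where "trans X Tau X'" "divergent X'"
proof -
  obtain f where "f 0 = X" "\<forall>i. trans (f i) Tau (f (Suc i))"
    using assms unfolding divergent_def by blast
  then have "trans X Tau (f 1)" "divergent (f 1)"
    unfolding divergent_def by (auto intro: exI[of _ "\<lambda>i. f (Suc i)"])
  then show ?thesis by (rule that)
qed

lemma divergent_tau_simulation:
  assumes sim: "\<And>X Y X'. R X Y \<Longrightarrow> trans X Tau X' \<Longrightarrow> \<exists>Y'. trans Y Tau Y' \<and> R X' Y'"
    and "R X Y" and "divergent X"
  shows "divergent Y"
proof (rule divergentI_invariant[where I = "\<lambda>Z. \<exists>W. divergent W \<and> R W Z"])
  show "\<exists>W. divergent W \<and> R W Y"
    using assms(2,3) by blast
next
  fix Z assume "\<exists>W. divergent W \<and> R W Z"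
  then obtain W W' where "R W Z" "trans W Tau W'" "divergent W'"
    by (blast elim: divergentE)
  with sim show "\<exists>Z'. trans Z Tau Z' \<and> (\<exists>W. divergent W \<and> R W Z')"
    by blast
qed

lemma divergent_threads_eq: "threads X = threads Y \<Longrightarrow> divergent X \<Longrightarrow> divergent Y"
  by (rule divergent_tau_simulation[where R = "\<lambda>X Y. threads X = threads Y"])
    (metis trans_imp_mtrans mtrans_imp_trans)

lemma divergent_if_Bang_thread:
  assumes "trans (Bang P) Tau Q" and "Bang P \<in># threads X"
  shows "divergent X"
proof (rule divergentI_invariant[where I = "\<lambda>Z. Bang P \<in># threads Z"])
  show "Bang P \<in># threads X" by fact
next
  fix Z assume "Bang P \<in># threads Z"
  then obtain M where "threads Z = add_mset (Bang P) M"
    by (metis mset_add)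
  with assms(1) obtain Z' where "trans Z Tau Z'" "threads Z' = M + threads Q"
    using thread_trans_imp_trans by blast
  with Bang_in_threads_of_trans[OF assms(1)] show "\<exists>Z'. trans Z Tau Z' \<and> Bang P \<in># threads Z'"
    by auto
qed

section \<open>The bisimulation\<close>

definition bang_residue :: "'n proc \<Rightarrow> 'n proc multiset \<Rightarrow> bool" where
  "bang_residue P B \<longleftrightarrow> mtau_star {#Bang P#} (add_mset (Bang P) B)"

lemma bang_residue_empty: "bang_residue P {#}"
  by (simp add: bang_residue_def)

lemma bang_residue_stuck:
  assumes "\<nexists>Q. trans (Bang P) Tau Q" and "bang_residue P B"
  shows "B = {#}"
  using assms(2) unfolding bang_residue_def
proof (cases rule: converse_rtranclpE)
  case (step N)
  from step(1) assms(1) show ?thesis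
    by (cases rule: mtrans.cases) auto
qed simp

lemma tau_star_Bang_imp_residue:
  assumes "tau_star (Bang P) X"
  obtains C where "threads X = add_mset (Bang P) C" "bang_residue P C"
proof -
  have m: "mtau_star {#Bang P#} (threads X)"
    using tau_star_imp_mtau_star[OF assms] by simp
  then have "Bang P \<in># threads X"
    using mtau_star_keeps_Bang by fastforce
  then obtain C where "threads X = add_mset (Bang P) C"
    by (metis mset_add)
  with m that show ?thesis
    unfolding bang_residue_def by simp
qed

definition bang_equiv :: "'n proc \<Rightarrow> 'n proc \<Rightarrow> 'n proc \<Rightarrow> bool" where
  "bang_equiv P X Y \<longleftrightarrow> (\<exists>A B C.
     threads X = add_mset (Bang P) (A + B) \<and> threads Y = add_mset (Bang P) (A + C) \<and>
     bang_residue P B \<and> bang_residue P C)"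

lemma bang_equiv_sym: "bang_equiv P X Y \<Longrightarrow> bang_equiv P Y X"
  unfolding bang_equiv_def by blast

lemma bang_equiv_simulation:
  assumes "bang_equiv P X Y" and X': "trans X \<alpha> X'"
  shows "\<exists>Y'. weak_trans Y \<alpha> Y' \<and> bang_equiv P X' Y'"
proof -
  obtain A B C where X: "threads X = add_mset (Bang P) (A + B)"
    and Y: "threads Y = add_mset (Bang P) (A + C)"
    and B: "bang_residue P B" and C: "bang_residue P C"
    using assms(1) unfolding bang_equiv_def by blast
  have "mtau_star ({#Bang P#} + (A + C)) (add_mset (Bang P) B + (A + C))"
    using B unfolding bang_residue_def by (rule mtau_star_add_right)
  then have "mtau_star (threads Y) (threads X + C)"
    using X Y by (simp add: ac_simps)
  then obtain Y1 where Y1: "tau_star Y Y1" "threads Y1 = threads X + C"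
    using mtau_star_imp_tau_star by blast
  have "mtrans (threads X + C) \<alpha> (threads X' + C)"
    using X' by (intro mtrans_add_right trans_imp_mtrans)
  then obtain Y' where Y': "trans Y1 \<alpha> Y'" "threads Y' = threads X' + C"
    using mtrans_imp_trans Y1(2) by metis
  have "Bang P \<in># threads X'"
    using mtrans_keeps_Bang[OF trans_imp_mtrans[OF X']] X by simp
  then obtain A' where "threads X' = add_mset (Bang P) A'"
    by (metis mset_add)
  with Y'(2) C have "bang_equiv P X' Y'"
    unfolding bang_equiv_def
    by (intro exI[of _ A'] exI[of _ "{#}"] exI[of _ C]) (simp add: bang_residue_empty)
  moreover have "weak_trans Y \<alpha> Y'"
    using Y1(1) Y'(1) unfolding weak_trans_def tau_star_def
    by (auto intro: rtranclp.rtrancl_into_rtrancl)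
  ultimately show ?thesis by blast
qed

lemma bang_equiv_divergent:
  assumes "bang_equiv P X Y" and "divergent X"
  shows "divergent Y"
proof -
  obtain A B C where X: "threads X = add_mset (Bang P) (A + B)"
    and Y: "threads Y = add_mset (Bang P) (A + C)"
    and B: "bang_residue P B" and C: "bang_residue P C"
    using assms(1) unfolding bang_equiv_def by blast
  show ?thesis
  proof (cases "\<exists>Q. trans (Bang P) Tau Q")
    case True
    with Y show ?thesis
      using divergent_if_Bang_thread by fastforce
  next
    case False
    then have "threads X = threads Y"
      using X Y bang_residue_stuck[OF False B] bang_residue_stuck[OF False C] by simp
    with assms(2) show ?thesis
      using divergent_threads_eq by blast
  qed
qed

lemma weak_bisimulation_bang_equiv: "weak_bisimulation (bang_equiv P)"
  unfolding weak_bisimulation_def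
  using bang_equiv_sym bang_equiv_simulation bang_equiv_divergent by metis

theorem mainTheorem11:
  fixes P P' :: "'n proc"
  assumes "infinite (UNIV :: 'n set)"
    and "tau_star (Bang P) P'"
  shows "wbisim (Bang P) P'"
proof -
  obtain C where "threads P' = add_mset (Bang P) C" "bang_residue P C"
    using assms(2) by (rule tau_star_Bang_imp_residue)
  then have "bang_equiv P (Bang P) P'"
    unfolding bang_equiv_def
    by (intro exI[of _ "{#}"] exI[of _ "{#}"] exI[of _ C]) (simp add: bang_residue_empty)
  with weak_bisimulation_bang_equiv show ?thesis
    unfolding wbisim_def by blast
qed

end
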